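(* Let $\Sigma$ be a Horn sequent $W,\Gamma,!\Delta\vdash Z$. If $\Sigma$ has a cut-free derivation in propositional linear logic (which can only use the rules I, L$\otimes$, R$\otimes$, L$\multimap$, L$\multimap\oplus$, L$\oplus$, L!, W!, C! listed in the context), then $\Sigma$ is derivable in Horn Linear Logic $\mathbf{HLL}$.
   Context: Positive literals are propositional variables. A simple product is a tensor product $q_1\otimes\cdots\otimes q_k$ ($k\ge 1$) of positive literals; $\otimes$ and $\oplus$ are treated as commutative and associative, so simple products correspond to nonempty finite multisets of literals, and $X\cong Y$ means $X,Y$ represent the same multiset. A Horn implication is a formula $X\multimap Y$ and a $\oplus$-Horn implication is $X\multimap(Y_1\oplus Y_2)$, where $X,Y,Y_1,Y_2$ are simple products. A Horn sequent is a sequent $W,\Gamma,!\Delta\vdash Z$ where $W,Z$ are simple products and $\Gamma,\Delta$ are finite multisets of Horn and $\oplus$-Horn implications ($!\Delta$ denotes $\{!A: A\in\Delta\}$). The linear logic rules that can occur in cut-free derivations of Horn sequents are: I: $X\vdash X$; L$\otimes$: from $\Sigma,X,Y\vdash Z$ infer $\Sigma,X\otimes Y\vdash Z$; R$\otimes$: from $\Sigma_1\vdash Z_1$ and $\Sigma_2\vdash Z_2$ infer $\Sigma_1,\Sigma_2\vdash Z_1\otimes Z_2$; L$\multimap$: from $\Sigma_1\vdash X$ and $Y,\Sigma_2\vdash Z$ infer $\Sigma_1,X\multimap Y,\Sigma_2\vdash Z$; L$\multimap\oplus$: from $\Sigma_1\vdash X$ and $(Y_1\oplus Y_2),\Sigma_2\vdash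 Z$ infer $\Sigma_1,X\multimap(Y_1\oplus Y_2),\Sigma_2\vdash Z$; L$\oplus$: from $\Sigma,Y_1\vdash Z$ and $\Sigma,Y_2\vdash Z$ infer $\Sigma,Y_1\oplus Y_2\vdash Z$; L!: from $\Sigma,A\vdash Z$ infer $\Sigma,!A\vdash Z$; W!: from $\Sigma\vdash Z$ infer $\Sigma,!A\vdash Z$; C!: from $\Sigma,!A,!A\vdash Z$ infer $\Sigma,!A\vdash Z$. $\mathbf{HLL}$ is the calculus on sequents $X,\Gamma,!\Delta\vdash Z$ ($X,Z$ simple products, $\Gamma,\Delta$ multisets of Horn/$\oplus$-Horn implications, and in the conclusion of a rule $(U\otimes V)$ in the antecedent may be identified with $U,V$) with rules: I: $X\vdash X$; L$\otimes$: from $X,\Gamma,!\Delta\vdash Z$ infer $Y,\Gamma,!\Delta\vdash Z$ where $X\cong Y$; H: $X,\,X\multimap Y\vdash Y$; M: from $X,\Gamma,!\Delta\vdash Y$ infer $(X\otimes V),\Gamma,!\Delta\vdash (Y\otimes V)$; $\oplus$-H: from $(Y_1\otimes V),\Gamma,!\Delta\vdash Z$ and $(Y_2\otimes V),\Gamma,!\Delta\vdash Z$ infer $(X\otimes V),\Gamma,X\multimap(Y_1\oplus Y_2),!\Delta\vdash Z$; L!: from $X,\Gamma,A,!\Delta\vdash Z$ infer $X,\Gamma,!A,!\Delta\vdash Z$; W!: from $X,\Gamma,!\Delta\vdash Z$ infer $X,\Gamma,!A,!\Delta\vdash Z$; C!: from $X,\Gamma,!A,!A,!\Delta\vdash Z$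 infer $X,\Gamma,!A,!\Delta\vdash Z$; Cut: from $W,\Gamma_1,!\Delta_1\vdash U$ and $U,\Gamma_2,!\Delta_2\vdash Z$ infer $W,\Gamma_1,\Gamma_2,!\Delta_1,!\Delta_2\vdash Z$. Here $A$ ranges over Horn and $\oplus$-Horn implications. *)

theory Defs
  imports "HOL-Library.Multiset"
begin

text \<open>Formulas of the Horn fragment, modulo associativity/commutativity of the tensor:
  a simple product is represented by the (nonempty) multiset of its literals, so
  the tensor of two simple products is multiset union.
  Prod X        : the simple product X
  Plus Y1 Y2    : Y1 (+) Y2
  Imp X Y       : X -o Y              (Horn implication)
  ImpPlus X Y1 Y2 : X -o (Y1 (+) Y2)  (plus-Horn implication)
  Bang A        : !A\<close>
datatype 'a fm =
    Prod "'a multiset"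
  | Plus "'a multiset" "'a multiset"
  | Imp "'a multiset" "'a multiset"
  | ImpPlus "'a multiset" "'a multiset" "'a multiset"
  | Bang "'a fm"

definition simple_product :: "'a multiset \<Rightarrow> bool" where
  "simple_product X \<longleftrightarrow> X \<noteq> {#}"

definition horn_impl :: "'a fm \<Rightarrow> bool" where
  "horn_impl A \<longleftrightarrow>
     (\<exists>X Y. A = Imp X Y \<and> simple_product X \<and> simple_product Y) \<or>
     (\<exists>X Y1 Y2. A = ImpPlus X Y1 Y2 \<and> simple_product X \<and> simple_product Y1 \<and> simple_product Y2)"

text \<open>Horn sequent W, Gamma, !Delta |- Z (Delta given without the bangs).\<close>
definition horn_sequent :: "'a multiset \<Rightarrow> 'a fm multiset \<Rightarrow> 'a fm multiset \<Rightarrow> 'a multiset \<Rightarrow> bool" where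
  "horn_sequent W \<Gamma> \<Delta> Z \<longleftrightarrow> simple_product W \<and> simple_product Z \<and>
     (\<forall>A\<in>#\<Gamma>. horn_impl A) \<and> (\<forall>A\<in>#\<Delta>. horn_impl A)"

inductive ll :: "'a fm multiset \<Rightarrow> 'a multiset \<Rightarrow> bool" where
  I: "simple_product X \<Longrightarrow> ll {#Prod X#} X"
| LTens: "ll (add_mset (Prod X) (add_mset (Prod Y) \<Sigma>)) Z \<Longrightarrow> simple_product X \<Longrightarrow> simple_product Y
          \<Longrightarrow> ll (add_mset (Prod (X + Y)) \<Sigma>) Z"
| RTens: "ll \<Sigma>1 Z1 \<Longrightarrow> ll \<Sigma>2 Z2 \<Longrightarrow> ll (\<Sigma>1 + \<Sigma>2) (Z1 + Z2)"
| LImp: "ll \<Sigma>1 X \<Longrightarrow> ll (add_mset (Prod Y) \<Sigma>2) Z \<Longrightarrow> ll (\<Sigma>1 + add_mset (Imp X Y) \<Sigma>2) Z"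
| LImpPlus: "ll \<Sigma>1 X \<Longrightarrow> ll (add_mset (Plus Y1 Y2) \<Sigma>2) Z
          \<Longrightarrow> ll (\<Sigma>1 + add_mset (ImpPlus X Y1 Y2) \<Sigma>2) Z"
| LPlus: "ll (add_mset (Prod Y1) \<Sigma>) Z \<Longrightarrow> ll (add_mset (Prod Y2) \<Sigma>) Z
          \<Longrightarrow> ll (add_mset (Plus Y1 Y2) \<Sigma>) Z"
| LBang: "ll (add_mset A \<Sigma>) Z \<Longrightarrow> ll (add_mset (Bang A) \<Sigma>) Z"
| WBang: "ll \<Sigma> Z \<Longrightarrow> ll (add_mset (Bang A) \<Sigma>) Z"
| CBang: "ll (add_mset (Bang A) (add_mset (Bang A) \<Sigma>)) Z \<Longrightarrow> ll (add_mset (Bang A) \<Sigma>) Z"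

text \<open>The rule L-tensor (X \<cong> Y) is the identity in the multiset representation.
  V in rules M and plus-H is a (possibly empty) context product.\<close>
inductive hll :: "'a multiset \<Rightarrow> 'a fm multiset \<Rightarrow> 'a fm multiset \<Rightarrow> 'a multiset \<Rightarrow> bool" where
  I: "simple_product X \<Longrightarrow> hll X {#} {#} X"
| LTens: "hll X \<Gamma> \<Delta> Z \<Longrightarrow> X = Y \<Longrightarrow> hll Y \<Gamma> \<Delta> Z"
| H: "simple_product X \<Longrightarrow> simple_product Y \<Longrightarrow> hll X {#Imp X Y#} {#} Y"
| M: "hll X \<Gamma> \<Delta> Y \<Longrightarrow> hll (X + V) \<Gamma> \<Delta> (Y + V)"
| PlusH: "horn_impl (ImpPlus X Y1 Y2) \<Longrightarrow> hll (Y1 + V) \<Gamma> \<Delta> Z \<Longrightarrow> hll (Y2 + V) \<Gamma> \<Delta> Z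
          \<Longrightarrow> hll (X + V) (add_mset (ImpPlus X Y1 Y2) \<Gamma>) \<Delta> Z"
| LBang: "horn_impl A \<Longrightarrow> hll X (add_mset A \<Gamma>) \<Delta> Z \<Longrightarrow> hll X \<Gamma> (add_mset A \<Delta>) Z"
| WBang: "horn_impl A \<Longrightarrow> hll X \<Gamma> \<Delta> Z \<Longrightarrow> hll X \<Gamma> (add_mset A \<Delta>) Z"
| CBang: "horn_impl A \<Longrightarrow> hll X \<Gamma> (add_mset A (add_mset A \<Delta>)) Z \<Longrightarrow> hll X \<Gamma> (add_mset A \<Delta>) Z"
| Cut: "hll W \<Gamma>1 \<Delta>1 U \<Longrightarrow> hll U \<Gamma>2 \<Delta>2 Z \<Longrightarrow> hll W (\<Gamma>1 + \<Gamma>2) (\<Delta>1 + \<Delta>2) Z"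

end

theory Submission
  imports Defs
begin

text \<open>Read an antecedent of a cut-free derivation as an HLL sequent: its products are tensored
  into the left-hand product, its Horn implications form \<open>\<Gamma>\<close> and its banged formulas \<open>!\<Delta>\<close>.
  The only formulas that fit none of these shapes are the disjunctions \<open>Y\<^sub>1 \<oplus> Y\<^sub>2\<close> created by
  L\<open>\<multimap>\<oplus>\<close>; each is replaced by one of its disjuncts.  By induction on the derivation, the HLL
  reading of every such choice is derivable: each linear logic rule is simulated by HLL rules
  plus Cut, with M supplying the context product, and L\<open>\<multimap>\<oplus>\<close> becomes \<open>\<oplus>\<close>-H because the two
  premises needed there are the two choices for the new disjunction.\<close>

lemma msed_rel_invL_eq:
  assumes "rel_mset R (add_mset a M) N" and "\<And>b. R a b \<Longrightarrow> b = a"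
  shows "\<exists>N1. N = add_mset a N1 \<and> rel_mset R M N1"
  using msed_rel_invL[OF assms(1)] assms(2) by blast

lemma rel_mset_union_invL:
  assumes "rel_mset R (M1 + M2) N"
  shows "\<exists>N1 N2. N = N1 + N2 \<and> rel_mset R M1 N1 \<and> rel_mset R M2 N2"
  using assms
proof (induction M1 arbitrary: N)
  case empty
  then show ?case by (intro exI[of _ "{#}"] exI[of _ N]) (simp add: rel_mset_Zero)
next
  case (add a M1)
  then obtain N' b where "N = add_mset b N'" "R a b" "rel_mset R (M1 + M2) N'"
    using msed_rel_invL[of R a "M1 + M2" N] by auto
  with add.IH obtain N1 N2 where "N' = N1 + N2" "rel_mset R M1 N1" "rel_mset R M2 N2"
    by blast
  with \<open>N = add_mset b N'\<close> \<open>R a b\<close> show ?case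
    by (intro exI[of _ "add_mset b N1"] exI[of _ N2]) (simp add: rel_mset_Plus)
qed

lemma hll_tensor:
  assumes "hll X1 \<Gamma>1 \<Delta>1 Z1" and "hll X2 \<Gamma>2 \<Delta>2 Z2"
  shows "hll (X1 + X2) (\<Gamma>1 + \<Gamma>2) (\<Delta>1 + \<Delta>2) (Z1 + Z2)"
proof -
  have "hll (X1 + X2) \<Gamma>1 \<Delta>1 (Z1 + X2)"
    using hll.M[OF assms(1)] .
  moreover have "hll (Z1 + X2) \<Gamma>2 \<Delta>2 (Z1 + Z2)"
    using hll.M[OF assms(2), of Z1] by (simp add: add.commute)
  ultimately show ?thesis by (rule hll.Cut)
qed

lemma hll_imp:
  assumes "hll X1 \<Gamma>1 \<Delta>1 X" and "simple_product X" "simple_product Y"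
    and "hll (Y + X2) \<Gamma>2 \<Delta>2 Z"
  shows "hll (X1 + X2) (\<Gamma>1 + add_mset (Imp X Y) \<Gamma>2) (\<Delta>1 + \<Delta>2) Z"
proof -
  have "hll X1 (\<Gamma>1 + {#Imp X Y#}) (\<Delta>1 + {#}) Y"
    using hll.Cut[OF assms(1) hll.H[OF assms(2,3)]] .
  then have "hll (X1 + X2) (\<Gamma>1 + {#Imp X Y#}) \<Delta>1 (Y + X2)"
    using hll.M by simp
  from hll.Cut[OF this assms(4)] show ?thesis by simp
qed

lemma hll_imp_plus:
  assumes "hll X1 \<Gamma>1 \<Delta>1 X" and "horn_impl (ImpPlus X Y1 Y2)"
    and "hll (Y1 + X2) \<Gamma>2 \<Delta>2 Z" "hll (Y2 + X2) \<Gamma>2 \<Delta>2 Z"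
  shows "hll (X1 + X2) (\<Gamma>1 + add_mset (ImpPlus X Y1 Y2) \<Gamma>2) (\<Delta>1 + \<Delta>2) Z"
  using hll.Cut[OF hll.M[OF assms(1)] hll.PlusH[OF assms(2-4)]] .

fun prod_literals :: "'a fm \<Rightarrow> 'a multiset" where
  "prod_literals (Prod X) = X"
| "prod_literals _ = {#}"

fun is_impl :: "'a fm \<Rightarrow> bool" where
  "is_impl (Imp _ _) = True"
| "is_impl (ImpPlus _ _ _) = True"
| "is_impl _ = False"

fun is_bang :: "'a fm \<Rightarrow> bool" where
  "is_bang (Bang _) = True"
| "is_bang _ = False"

fun unbang :: "'a fm \<Rightarrow> 'a fm" where
  "unbang (Bang A) = A"
| "unbang A = A"

definition tensor_part :: "'a fm multiset \<Rightarrow> 'a multiset" where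
  "tensor_part S = \<Sum>\<^sub># (image_mset prod_literals S)"

definition impl_part :: "'a fm multiset \<Rightarrow> 'a fm multiset" where
  "impl_part S = filter_mset is_impl S"

definition bang_part :: "'a fm multiset \<Rightarrow> 'a fm multiset" where
  "bang_part S = image_mset unbang (filter_mset is_bang S)"

lemma tensor_part_simps [simp]:
  "tensor_part {#} = {#}"
  "tensor_part (add_mset A S) = prod_literals A + tensor_part S"
  "tensor_part (S1 + S2) = tensor_part S1 + tensor_part S2"
  by (simp_all add: tensor_part_def)

lemma impl_part_simps [simp]:
  "impl_part {#} = {#}"
  "impl_part (add_mset A S) = (if is_impl A then add_mset A (impl_part S) else impl_part S)"
  "impl_part (S1 + S2) = impl_part S1 + impl_part S2"
  by (simp_all add: impl_part_def)

lemma bang_part_simps [simp]: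
  "bang_part {#} = {#}"
  "bang_part (add_mset A S) = (if is_bang A then add_mset (unbang A) (bang_part S) else bang_part S)"
  "bang_part (S1 + S2) = bang_part S1 + bang_part S2"
  by (simp_all add: bang_part_def)

lemma horn_impl_parts:
  assumes "horn_impl A"
  shows "prod_literals A = {#}" "is_impl A" "\<not> is_bang A"
  using assms by (auto simp: horn_impl_def)

lemma parts_of_horn_impls:
  assumes "\<forall>A\<in>#\<Gamma>. horn_impl A"
  shows "tensor_part \<Gamma> = {#}" "impl_part \<Gamma> = \<Gamma>" "bang_part \<Gamma> = {#}"
  using assms by (induction \<Gamma>) (simp_all add: horn_impl_parts)

lemma parts_of_bangs:
  "tensor_part (image_mset Bang \<Delta>) = {#}" "impl_part (image_mset Bang \<Delta>) = {#}"
  "bang_part (image_mset Bang \<Delta>) = \<Delta>"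
  by (induction \<Delta>) simp_all

definition plus_choice :: "'a fm \<Rightarrow> 'a fm \<Rightarrow> bool" where
  "plus_choice A B \<longleftrightarrow> (case A of Plus Y1 Y2 \<Rightarrow> B = Prod Y1 \<or> B = Prod Y2 | _ \<Rightarrow> B = A)"

lemma plus_choice_simps [simp]:
  "plus_choice (Prod X) B \<longleftrightarrow> B = Prod X"
  "plus_choice (Plus Y1 Y2) B \<longleftrightarrow> B = Prod Y1 \<or> B = Prod Y2"
  "plus_choice (Imp X Y) B \<longleftrightarrow> B = Imp X Y"
  "plus_choice (ImpPlus X Y1 Y2) B \<longleftrightarrow> B = ImpPlus X Y1 Y2"
  "plus_choice (Bang A) B \<longleftrightarrow> B = Bang A"
  by (simp_all add: plus_choice_def)

lemma plus_choice_horn_impl: "horn_impl A \<Longrightarrow> plus_choice A B \<longleftrightarrow> B = A"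
  by (auto simp: horn_impl_def)

definition hll_choices :: "'a fm multiset \<Rightarrow> 'a multiset \<Rightarrow> bool" where
  "hll_choices S Z \<longleftrightarrow>
     (\<forall>S'. rel_mset plus_choice S S' \<longrightarrow> hll (tensor_part S') (impl_part S') (bang_part S') Z)"

lemma hll_choicesI:
  "(\<And>S'. rel_mset plus_choice S S' \<Longrightarrow> hll (tensor_part S') (impl_part S') (bang_part S') Z)
   \<Longrightarrow> hll_choices S Z"
  unfolding hll_choices_def by blast

lemma hll_choicesD:
  "hll_choices S Z \<Longrightarrow> rel_mset plus_choice S S'
   \<Longrightarrow> hll (tensor_part S') (impl_part S') (bang_part S') Z"
  unfolding hll_choices_def by blast

lemma rel_mset_plus_choice_invL:
  assumes "rel_mset plus_choice (add_mset A S) S'" and "\<And>Y1 Y2. A \<noteq> Plus Y1 Y2"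
  shows "\<exists>N. S' = add_mset A N \<and> rel_mset plus_choice S N"
  using assms by (intro msed_rel_invL_eq) (auto simp: plus_choice_def split: fm.splits)

lemma hll_choices_I: "simple_product X \<Longrightarrow> hll_choices {#Prod X#} X"
  by (auto intro!: hll_choicesI hll.I dest: rel_mset_plus_choice_invL)

lemma hll_choices_LTens:
  assumes "hll_choices (add_mset (Prod X) (add_mset (Prod Y) \<Sigma>)) Z"
  shows "hll_choices (add_mset (Prod (X + Y)) \<Sigma>) Z"
proof (rule hll_choicesI)
  fix S' assume "rel_mset plus_choice (add_mset (Prod (X + Y)) \<Sigma>) S'"
  then obtain N where "S' = add_mset (Prod (X + Y)) N" "rel_mset plus_choice \<Sigma> N"
    using rel_mset_plus_choice_invL by blast
  with hll_choicesD[OF assms, of "add_mset (Prod X) (add_mset (Prod Y) N)"]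
  show "hll (tensor_part S') (impl_part S') (bang_part S') Z"
    by (simp add: rel_mset_Plus add.assoc)
qed

lemma hll_choices_RTens:
  assumes "hll_choices \<Sigma>1 Z1" "hll_choices \<Sigma>2 Z2"
  shows "hll_choices (\<Sigma>1 + \<Sigma>2) (Z1 + Z2)"
proof (rule hll_choicesI)
  fix S' assume "rel_mset plus_choice (\<Sigma>1 + \<Sigma>2) S'"
  then obtain N1 N2 where "S' = N1 + N2" "rel_mset plus_choice \<Sigma>1 N1" "rel_mset plus_choice \<Sigma>2 N2"
    using rel_mset_union_invL by blast
  with hll_tensor[OF hll_choicesD[OF assms(1)] hll_choicesD[OF assms(2)]]
  show "hll (tensor_part S') (impl_part S') (bang_part S') (Z1 + Z2)"
    by simp
qed

lemma hll_choices_LImp: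
  assumes "hll_choices \<Sigma>1 X" "hll_choices (add_mset (Prod Y) \<Sigma>2) Z"
    and "horn_impl (Imp X Y)"
  shows "hll_choices (\<Sigma>1 + add_mset (Imp X Y) \<Sigma>2) Z"
proof (rule hll_choicesI)
  fix S' assume "rel_mset plus_choice (\<Sigma>1 + add_mset (Imp X Y) \<Sigma>2) S'"
  then obtain N1 N2' where S': "S' = N1 + N2'" and N1: "rel_mset plus_choice \<Sigma>1 N1"
    and "rel_mset plus_choice (add_mset (Imp X Y) \<Sigma>2) N2'"
    using rel_mset_union_invL by blast
  then obtain N2 where N2': "N2' = add_mset (Imp X Y) N2" and N2: "rel_mset plus_choice \<Sigma>2 N2"
    using rel_mset_plus_choice_invL by blast
  have "simple_product X" "simple_product Y"
    using assms(3) by (auto simp: horn_impl_def)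
  moreover have "hll (Y + tensor_part N2) (impl_part N2) (bang_part N2) Z"
    using hll_choicesD[OF assms(2), of "add_mset (Prod Y) N2"] N2 by (simp add: rel_mset_Plus)
  ultimately show "hll (tensor_part S') (impl_part S') (bang_part S') Z"
    using hll_imp[OF hll_choicesD[OF assms(1) N1]] unfolding S' N2' by simp
qed

lemma hll_choices_LImpPlus:
  assumes "hll_choices \<Sigma>1 X" "hll_choices (add_mset (Plus Y1 Y2) \<Sigma>2) Z"
    and "horn_impl (ImpPlus X Y1 Y2)"
  shows "hll_choices (\<Sigma>1 + add_mset (ImpPlus X Y1 Y2) \<Sigma>2) Z"
proof (rule hll_choicesI)
  fix S' assume "rel_mset plus_choice (\<Sigma>1 + add_mset (ImpPlus X Y1 Y2) \<Sigma>2) S'"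
  then obtain N1 N2' where S': "S' = N1 + N2'" and N1: "rel_mset plus_choice \<Sigma>1 N1"
    and "rel_mset plus_choice (add_mset (ImpPlus X Y1 Y2) \<Sigma>2) N2'"
    using rel_mset_union_invL by blast
  then obtain N2 where N2': "N2' = add_mset (ImpPlus X Y1 Y2) N2" and N2: "rel_mset plus_choice \<Sigma>2 N2"
    using rel_mset_plus_choice_invL by blast
  have "hll (Y + tensor_part N2) (impl_part N2) (bang_part N2) Z" if "Y = Y1 \<or> Y = Y2" for Y
    using hll_choicesD[OF assms(2), of "add_mset (Prod Y) N2"] N2 that by (auto simp: rel_mset_Plus)
  with hll_imp_plus[OF hll_choicesD[OF assms(1) N1] assms(3)]
  show "hll (tensor_part S') (impl_part S') (bang_part S') Z"
    unfolding S' N2' by simp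
qed

lemma hll_choices_LPlus:
  assumes "hll_choices (add_mset (Prod Y1) \<Sigma>) Z" "hll_choices (add_mset (Prod Y2) \<Sigma>) Z"
  shows "hll_choices (add_mset (Plus Y1 Y2) \<Sigma>) Z"
proof (rule hll_choicesI)
  fix S' assume "rel_mset plus_choice (add_mset (Plus Y1 Y2) \<Sigma>) S'"
  then obtain N Y where N: "S' = add_mset (Prod Y) N" "rel_mset plus_choice \<Sigma> N"
    and "Y = Y1 \<or> Y = Y2"
    using msed_rel_invL by fastforce
  then have "hll_choices (add_mset (Prod Y) \<Sigma>) Z"
    using assms by blast
  from hll_choicesD[OF this, of S'] N
  show "hll (tensor_part S') (impl_part S') (bang_part S') Z"
    by (simp add: rel_mset_Plus)
qed

lemma hll_choices_LBang:
  assumes "hll_choices (add_mset A \<Sigma>) Z" and "horn_impl A"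
  shows "hll_choices (add_mset (Bang A) \<Sigma>) Z"
proof (rule hll_choicesI)
  fix S' assume "rel_mset plus_choice (add_mset (Bang A) \<Sigma>) S'"
  then obtain N where "S' = add_mset (Bang A) N" "rel_mset plus_choice \<Sigma> N"
    using rel_mset_plus_choice_invL by blast
  then show "hll (tensor_part S') (impl_part S') (bang_part S') Z"
    using hll_choicesD[OF assms(1), of "add_mset A N"] hll.LBang[OF assms(2)]
    by (simp add: rel_mset_Plus plus_choice_horn_impl[OF assms(2)] horn_impl_parts[OF assms(2)])
qed

lemma hll_choices_WBang:
  assumes "hll_choices \<Sigma> Z" and "horn_impl A"
  shows "hll_choices (add_mset (Bang A) \<Sigma>) Z"
proof (rule hll_choicesI)
  fix S' assume "rel_mset plus_choice (add_mset (Bang A) \<Sigma>) S'"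
  then obtain N where "S' = add_mset (Bang A) N" "rel_mset plus_choice \<Sigma> N"
    using rel_mset_plus_choice_invL by blast
  then show "hll (tensor_part S') (impl_part S') (bang_part S') Z"
    using hll.WBang[OF assms(2) hll_choicesD[OF assms(1)]] by simp
qed

lemma hll_choices_CBang:
  assumes "hll_choices (add_mset (Bang A) (add_mset (Bang A) \<Sigma>)) Z" and "horn_impl A"
  shows "hll_choices (add_mset (Bang A) \<Sigma>) Z"
proof (rule hll_choicesI)
  fix S' assume "rel_mset plus_choice (add_mset (Bang A) \<Sigma>) S'"
  then obtain N where "S' = add_mset (Bang A) N" "rel_mset plus_choice \<Sigma> N"
    using rel_mset_plus_choice_invL by blast
  then show "hll (tensor_part S') (impl_part S') (bang_part S') Z"
    using hll_choicesD[OF assms(1), of "add_mset (Bang A) (add_mset (Bang A) N)"]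
      hll.CBang[OF assms(2)]
    by (simp add: rel_mset_Plus)
qed

definition antecedent_formula :: "'a fm \<Rightarrow> bool" where
  "antecedent_formula A \<longleftrightarrow> (\<exists>X. A = Prod X) \<or> (\<exists>Y1 Y2. A = Plus Y1 Y2) \<or> horn_impl A
     \<or> (\<exists>B. A = Bang B \<and> horn_impl B)"

lemma antecedent_formula_simps [simp]:
  "antecedent_formula (Prod X)" "antecedent_formula (Plus Y1 Y2)"
  "antecedent_formula (Bang A) \<longleftrightarrow> horn_impl A"
  "antecedent_formula (Imp X Y) \<longleftrightarrow> horn_impl (Imp X Y)"
  "antecedent_formula (ImpPlus X Y1 Y2) \<longleftrightarrow> horn_impl (ImpPlus X Y1 Y2)"
  by (auto simp: antecedent_formula_def horn_impl_def)

lemma ll_imp_hll_choices: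
  "ll S Z \<Longrightarrow> \<forall>A\<in>#S. antecedent_formula A \<Longrightarrow> hll_choices S Z"
proof (induction rule: ll.induct)
  case LImp
  then show ?case by (intro hll_choices_LImp) auto
next
  case LImpPlus
  then show ?case by (intro hll_choices_LImpPlus) auto
next
  case (LBang A \<Sigma> Z)
  then have "horn_impl A" by simp
  with LBang show ?case by (simp add: hll_choices_LBang antecedent_formula_def)
qed (auto intro: hll_choices_I hll_choices_LTens hll_choices_RTens hll_choices_LPlus
    hll_choices_WBang hll_choices_CBang)

theorem theorem1:
  assumes "horn_sequent W \<Gamma> \<Delta> Z"
    and "ll (add_mset (Prod W) (\<Gamma> + image_mset Bang \<Delta>)) Z"
  shows "hll W \<Gamma> \<Delta> Z"
proof -
  let ?S = "add_mset (Prod W) (\<Gamma> + image_mset Bang \<Delta>)"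
  have \<Gamma>: "\<forall>A\<in>#\<Gamma>. horn_impl A" and \<Delta>: "\<forall>A\<in>#\<Delta>. horn_impl A"
    using assms(1) by (auto simp: horn_sequent_def)
  then have "\<forall>A\<in>#?S. antecedent_formula A"
    by (auto simp: antecedent_formula_def)
  with assms(2) have "hll_choices ?S Z"
    by (rule ll_imp_hll_choices)
  moreover have "rel_mset plus_choice ?S ?S"
    using \<Gamma> by (intro multiset.rel_refl_strong) (auto simp: plus_choice_horn_impl)
  ultimately have "hll (tensor_part ?S) (impl_part ?S) (bang_part ?S) Z"
    by (rule hll_choicesD)
  then show ?thesis
    by (simp add: parts_of_horn_impls[OF \<Gamma>] parts_of_bangs)
qed

end
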